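(* In $SO(6)$, writing diagonal matrices as vectors of their diagonal entries, let $\Gamma_1=\{(1,1,1,1,1,1),(-1,-1,-1,-1,-1,-1),(-1,-1,1,1,1,1),(-1,1,-1,1,1,1),(1,-1,-1,1,1,1),(-1,1,1,-1,-1,-1),(1,-1,1,-1,-1,-1),(1,1,-1,-1,-1,-1)\}$ and $\Gamma_2=\{(1,1,1,1,1,1),(-1,-1,-1,-1,-1,-1),(-1,-1,1,1,1,1),(1,1,-1,-1,1,1),(1,1,1,1,-1,-1),(-1,-1,-1,-1,1,1),(-1,-1,1,1,-1,-1),(1,1,-1,-1,-1,-1)\}$. Then $\Gamma_1$ and $\Gamma_2$ are subgroups of $SO(6)$ which are almost conjugate in $SO(6)$ but not conjugate in $SO(6)$.
   Context: Two finite subgroups $\Gamma_1,\Gamma_2$ of a group $G$ are almost conjugate in $G$ if $\#([b]_G\cap\Gamma_1)=\#([b]_G\cap\Gamma_2)$ for every conjugacy class $[b]_G$ of $G$. *)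

theory Defs
  imports "HOL-Analysis.Analysis" "HOL-Algebra.Group"
begin

definition SO6 :: "(real^6^6) monoid" where
  "SO6 = \<lparr>carrier = {A. rotation_matrix A}, mult = (**), one = mat 1\<rparr>"

definition diag6 :: "real^6 \<Rightarrow> real^6^6" where
  "diag6 d = (\<chi> i j. if i = j then d $ i else 0)"

definition dmat :: "real list \<Rightarrow> real^6^6" where
  "dmat xs = diag6 (vector xs)"

definition conj_class :: "('a, 'b) monoid_scheme \<Rightarrow> 'a \<Rightarrow> 'a set" where
  "conj_class G b = {g \<otimes>\<^bsub>G\<^esub> b \<otimes>\<^bsub>G\<^esub> inv\<^bsub>G\<^esub> g | g. g \<in> carrier G}"

definition almost_conjugate :: "('a, 'b) monoid_scheme \<Rightarrow> 'a set \<Rightarrow> 'a set \<Rightarrow> bool" where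
  "almost_conjugate G H1 H2 \<longleftrightarrow>
     (\<forall>b \<in> carrier G. card (conj_class G b \<inter> H1) = card (conj_class G b \<inter> H2))"

definition conjugate_subgroups :: "('a, 'b) monoid_scheme \<Rightarrow> 'a set \<Rightarrow> 'a set \<Rightarrow> bool" where
  "conjugate_subgroups G H1 H2 \<longleftrightarrow>
     (\<exists>g \<in> carrier G. (\<lambda>h. g \<otimes>\<^bsub>G\<^esub> h \<otimes>\<^bsub>G\<^esub> inv\<^bsub>G\<^esub> g) ` H1 = H2)"

definition Gamma1 :: "(real^6^6) set" where
  "Gamma1 = dmat ` {[1,1,1,1,1,1], [-1,-1,-1,-1,-1,-1], [-1,-1,1,1,1,1], [-1,1,-1,1,1,1],
                    [1,-1,-1,1,1,1], [-1,1,1,-1,-1,-1], [1,-1,1,-1,-1,-1], [1,1,-1,-1,-1,-1]}"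

definition Gamma2 :: "(real^6^6) set" where
  "Gamma2 = dmat ` {[1,1,1,1,1,1], [-1,-1,-1,-1,-1,-1], [-1,-1,1,1,1,1], [1,1,-1,-1,1,1],
                    [1,1,1,1,-1,-1], [-1,-1,-1,-1,1,1], [-1,-1,1,1,-1,-1], [1,1,-1,-1,-1,-1]}"

end

theory Submission
  imports Defs "HOL-Combinatorics.Permutations"
begin

text \<open>
  Almost conjugacy: the elements of \<open>Gamma1\<close> and \<open>Gamma2\<close> can be listed so that the i-th
  elements are conjugate in SO(6), by the identity or by one of the even permutation matrices
  of the coordinate permutations (1 4)(2 5) and (2 5)(3 6).  A general group-theoretic lemma
  shows that such a term-by-term conjugate enumeration forces equal intersection counts with
  every conjugacy class.

  Non-conjugacy: conjugation by an orthogonal matrix is linear, injective and preserves the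
  trace, so it carries the sum of the trace-2 elements of one subgroup to the sum of the
  trace-2 elements of its image.  For \<open>Gamma2\<close> this sum is the identity matrix, for
  \<open>Gamma1\<close> it is diag(-1,-1,-1,3,3,3); but only the identity is conjugate to the identity.
\<close>

lemma (in group) conj_class_conj_iff:
  assumes "x \<in> carrier G" "g \<in> carrier G" "b \<in> carrier G"
  shows "g \<otimes> x \<otimes> inv g \<in> conj_class G b \<longleftrightarrow> x \<in> conj_class G b"
proof
  assume "g \<otimes> x \<otimes> inv g \<in> conj_class G b"
  then obtain h where h: "h \<in> carrier G" "g \<otimes> x \<otimes> inv g = h \<otimes> b \<otimes> inv h"
    unfolding conj_class_def by auto
  have "x = inv g \<otimes> (g \<otimes> x \<otimes> inv g) \<otimes> g"
    using assms by (simp add: m_assoc) (simp add: m_assoc[symmetric])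
  also have "\<dots> = (inv g \<otimes> h) \<otimes> b \<otimes> inv (inv g \<otimes> h)"
    using assms h by (simp add: m_assoc inv_mult_group)
  finally show "x \<in> conj_class G b"
    unfolding conj_class_def using assms h by auto
next
  assume "x \<in> conj_class G b"
  then obtain h where h: "h \<in> carrier G" "x = h \<otimes> b \<otimes> inv h"
    unfolding conj_class_def by auto
  have "g \<otimes> x \<otimes> inv g = (g \<otimes> h) \<otimes> b \<otimes> inv (g \<otimes> h)"
    using assms h by (simp add: m_assoc inv_mult_group)
  then show "g \<otimes> x \<otimes> inv g \<in> conj_class G b"
    unfolding conj_class_def using assms h by auto
qed

lemma (in group) almost_conjugate_reindex:
  assumes inj: "inj_on X I" "inj_on Y I"
    and X: "X ` I \<subseteq> carrier G"
    and conj: "\<And>i. i \<in> I \<Longrightarrow> \<exists>g\<in>carrier G. Y i = g \<otimes> X i \<otimes> inv g"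
  shows "almost_conjugate G (X ` I) (Y ` I)"
  unfolding almost_conjugate_def
proof
  fix b assume b: "b \<in> carrier G"
  let ?C = "conj_class G b"
  have same: "{i\<in>I. X i \<in> ?C} = {i\<in>I. Y i \<in> ?C}"
  proof (intro Collect_cong conj_cong refl)
    fix i assume "i \<in> I"
    with conj obtain g where "g \<in> carrier G" "Y i = g \<otimes> X i \<otimes> inv g" by blast
    with X b \<open>i \<in> I\<close> show "X i \<in> ?C \<longleftrightarrow> Y i \<in> ?C"
      by (simp add: conj_class_conj_iff image_subset_iff)
  qed
  have "card (?C \<inter> X ` I) = card (X ` {i\<in>I. X i \<in> ?C})"
    by (rule arg_cong[where f = card]) auto
  also have "\<dots> = card {i\<in>I. X i \<in> ?C}"
    by (rule card_image) (rule inj_on_subset[OF inj(1)], auto)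
  also have "\<dots> = card (Y ` {i\<in>I. Y i \<in> ?C})"
    unfolding same by (rule card_image[symmetric]) (rule inj_on_subset[OF inj(2)], auto)
  also have "\<dots> = card (?C \<inter> Y ` I)"
    by (rule arg_cong[where f = card]) auto
  finally show "card (?C \<inter> X ` I) = card (?C \<inter> Y ` I)" .
qed

text \<open>A nonempty, multiplicatively closed set of involutions is a subgroup: every element is its
  own inverse.\<close>
lemma (in group) subgroup_of_involutions:
  assumes "H \<subseteq> carrier G" "H \<noteq> {}"
    and "\<And>a. a \<in> H \<Longrightarrow> a \<otimes> a = \<one>"
    and "\<And>a b. a \<in> H \<Longrightarrow> b \<in> H \<Longrightarrow> a \<otimes> b \<in> H"
  shows "subgroup H G"
proof (rule subgroupI)
  fix a assume "a \<in> H"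
  then have "inv a = a"
    using assms(1,3) by (intro inv_equality) auto
  with \<open>a \<in> H\<close> show "inv a \<in> H" by simp
qed (use assms in auto)

lemma SO6_simps [simp]:
  "carrier SO6 = {A. rotation_matrix A}" "mult SO6 = (**)" "one SO6 = mat 1"
  by (simp_all add: SO6_def)

lemma SO6_group: "group SO6"
proof (rule groupI)
  fix x assume "x \<in> carrier SO6"
  then show "\<exists>y\<in>carrier SO6. y \<otimes>\<^bsub>SO6\<^esub> x = \<one>\<^bsub>SO6\<^esub>"
    by (intro bexI[of _ "transpose x"]) (auto simp: rotation_matrix_def orthogonal_matrix_def)
qed (auto simp: rotation_matrix_def orthogonal_matrix_mul det_mul orthogonal_matrix_id matrix_mul_assoc)

lemma SO6_inv: "x \<in> carrier SO6 \<Longrightarrow> inv\<^bsub>SO6\<^esub> x = transpose x"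
  by (rule group.inv_equality[OF SO6_group]) (auto simp: rotation_matrix_def orthogonal_matrix_def)

definition diag_mat :: "'a::zero^'n \<Rightarrow> 'a^'n^'n" where
  "diag_mat d = (\<chi> i j. if i = j then d $ i else 0)"

lemma diag_mat_nth [simp]: "diag_mat d $ i $ j = (if i = j then d $ i else 0)"
  by (simp add: diag_mat_def)

lemma diag_mat_eq_iff: "diag_mat d = diag_mat e \<longleftrightarrow> d = e"
  by (auto simp: vec_eq_iff)

lemma transpose_diag_mat [simp]: "transpose (diag_mat d) = diag_mat d"
  by (simp add: vec_eq_iff transpose_def)

lemma diag_mat_mult:
  fixes d e :: "'a::semiring_1^'n"
  shows "diag_mat d ** diag_mat e = diag_mat (\<chi> i. d $ i * e $ i)"
proof -
  have "(if i = k then a else 0) * (if k = j then b else 0) =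
      (if k = i then (if i = j then a * b else 0) else (0::'a))"
    for i j k :: 'n and a b by auto
  then show ?thesis by (simp add: vec_eq_iff matrix_matrix_mult_def)
qed

lemma diag_mat_add: "diag_mat d + diag_mat e = diag_mat (d + e :: 'a::monoid_add^'n)"
  by (simp add: vec_eq_iff)

lemma mat_1_eq_diag_mat: "mat 1 = diag_mat (\<chi> i. 1)"
  by (simp add: vec_eq_iff mat_def)

lemma det_diag_mat: "det (diag_mat d) = (\<Prod>i\<in>UNIV. d $ i :: 'a::comm_ring_1)"
  by (simp add: det_diagonal)

lemma trace_diag_mat: "trace (diag_mat d) = (\<Sum>i\<in>UNIV. d $ i)"
  by (simp add: trace_def)

lemma rotation_matrix_sign_diag:
  fixes d :: "real^'n"
  assumes "\<And>i. d $ i \<in> {-1, 1}" and "(\<Prod>i\<in>UNIV. d $ i) = 1"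
  shows "rotation_matrix (diag_mat d)"
proof -
  have "d $ i * d $ i = 1" for i
    using assms(1)[of i] by auto
  then have "(\<chi> i. d $ i * d $ i) = (\<chi> i. 1)"
    by (simp add: vec_eq_iff)
  then show ?thesis
    using assms(2)
    by (simp add: rotation_matrix_def orthogonal_matrix diag_mat_mult mat_1_eq_diag_mat det_diag_mat)
qed

definition perm_mat :: "('n \<Rightarrow> 'n) \<Rightarrow> real^'n^'n" where
  "perm_mat p = (\<chi> i j. if p i = j then 1 else 0)"

lemma perm_mat_rows: "perm_mat p = (\<chi> i. mat 1 $ p i)"
  by (simp add: perm_mat_def mat_def vec_eq_iff)

lemma det_perm_mat: "p permutes UNIV \<Longrightarrow> det (perm_mat p) = of_int (sign p)"
  unfolding perm_mat_rows by (simp add: det_permute_rows)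

lemma orthogonal_perm_mat:
  fixes p :: "'n::finite \<Rightarrow> 'n"
  assumes p: "p permutes UNIV"
  shows "orthogonal_matrix (perm_mat p)"
proof -
  let ?e = "\<lambda>(i::'n) k. if k = i then 1 else (0::real)"
  have "(\<Sum>k\<in>UNIV. ?e i (p k) * ?e j (p k)) = (\<Sum>k\<in>UNIV. ?e i k * ?e j k)" for i j
    using sum.permute[OF p, of "\<lambda>k. ?e i k * ?e j k"] by (simp add: o_def)
  also have "(\<Sum>k\<in>UNIV. ?e i k * ?e j k) = ?e i j" for i j
  proof -
    have "?e i k * ?e j k = (if k = i then ?e i j else 0)" for k
      by auto
    then show ?thesis by simp
  qed
  finally show ?thesis
    by (simp add: orthogonal_matrix perm_mat_def transpose_def matrix_matrix_mult_def mat_def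
        vec_eq_iff eq_commute[of "p _"])
qed

lemma perm_mat_conj_diag:
  assumes p: "p permutes UNIV"
  shows "perm_mat p ** diag_mat d ** transpose (perm_mat p) = diag_mat (\<chi> i. d $ p i)"
proof -
  have inj: "p i = p j \<longleftrightarrow> i = j" for i j
    using permutes_inj[OF p] by (auto dest: injD)
  have "(if p i = k then 1 else 0) * (if k = j then d $ k else 0) =
      (if k = p i then (if p i = j then d $ j else 0) else 0)" for i j k
    by auto
  then have left: "perm_mat p ** diag_mat d = (\<chi> i j. if p i = j then d $ j else 0)"
    by (simp add: perm_mat_def matrix_matrix_mult_def vec_eq_iff)
  have "(if p i = k then x else 0) * (if p j = k then 1 else 0) =
      (if k = p i then (if p i = p j then x else 0) else (0::real))" for i j k x
    by auto
  then show ?thesis unfolding left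
    by (simp add: perm_mat_def transpose_def matrix_matrix_mult_def vec_eq_iff inj)
qed

lemma matrix_add_rdistrib: "(A + B) ** C = A ** C + B ** C"
  by (simp add: matrix_matrix_mult_def vec_eq_iff distrib_right sum.distrib)

lemma matrix_mul_zero: "A ** 0 = 0" "0 ** A = 0"
  by (simp_all add: matrix_matrix_mult_def vec_eq_iff)

lemma matrix_conj_sum: "G ** sum f S ** H = (\<Sum>x\<in>S. G ** f x ** H)"
  by (induction S rule: infinite_finite_induct)
    (simp_all add: matrix_mul_zero matrix_add_ldistrib matrix_add_rdistrib)

lemma orthogonal_conj_cancel:
  assumes "orthogonal_matrix (Q :: real^'n^'n)"
  shows "transpose Q ** (Q ** A ** transpose Q) ** Q = A"
proof -
  have "transpose Q ** Q = mat 1" using assms by (simp add: orthogonal_matrix)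
  then show ?thesis by (simp add: matrix_mul_assoc) (simp add: matrix_mul_assoc[symmetric])
qed

lemma trace_orthogonal_conj:
  assumes "orthogonal_matrix (Q :: real^'n^'n)"
  shows "trace (Q ** A ** transpose Q) = trace A"
proof -
  have "trace (Q ** A ** transpose Q) = trace (transpose Q ** (Q ** A))"
    by (rule trace_mul_sym)
  also have "\<dots> = trace A"
    using assms by (simp add: orthogonal_matrix matrix_mul_assoc)
  finally show ?thesis .
qed

lemma orthogonal_conj_eq_id:
  assumes "orthogonal_matrix (Q :: real^'n^'n)" and "Q ** A ** transpose Q = mat 1"
  shows "A = mat 1"
  using orthogonal_conj_cancel[OF assms(1), of A] assms
  by (simp add: orthogonal_matrix)

lemma orthogonal_conj_trace_sum:
  fixes Q :: "real^'n^'n"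
  assumes Q: "orthogonal_matrix Q"
    and onto: "(\<lambda>A. Q ** A ** transpose Q) ` H1 = H2"
  shows "Q ** (\<Sum>{A\<in>H1. trace A = c}) ** transpose Q = (\<Sum>{A\<in>H2. trace A = c})"
proof -
  let ?conj = "\<lambda>A. Q ** A ** transpose Q"
  have "inj ?conj"
    by (rule inj_on_inverseI[where g = "\<lambda>B. transpose Q ** B ** Q"])
      (rule orthogonal_conj_cancel[OF Q])
  moreover have "?conj ` {A\<in>H1. trace A = c} = {A\<in>H2. trace A = c}"
    using onto trace_orthogonal_conj[OF Q] by auto
  ultimately show ?thesis
    unfolding matrix_conj_sum by (metis (no_types, lifting) inj_on_subset subset_UNIV sum.reindex_cong)
qed

lemma exhaust_6:
  fixes x :: 6
  shows "x = 1 \<or> x = 2 \<or> x = 3 \<or> x = 4 \<or> x = 5 \<or> x = 6"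
proof (induct x)
  case (of_int z)
  then have "z = 0 \<or> z = 1 \<or> z = 2 \<or> z = 3 \<or> z = 4 \<or> z = 5" by fastforce
  then show ?case by auto
qed

lemma forall_6: "(\<forall>i::6. P i) \<longleftrightarrow> P 1 \<and> P 2 \<and> P 3 \<and> P 4 \<and> P 5 \<and> P 6"
  by (metis exhaust_6)

lemma UNIV_6: "(UNIV :: 6 set) = {1, 2, 3, 4, 5, 6}"
  using exhaust_6 by auto

lemma sum_UNIV_6: "sum f (UNIV :: 6 set) = f 1 + f 2 + f 3 + f 4 + f 5 + f 6"
  unfolding UNIV_6 by (simp add: add.assoc)

lemma prod_UNIV_6: "prod f (UNIV :: 6 set) = f 1 * f 2 * f 3 * f 4 * f 5 * f 6"
  unfolding UNIV_6 by (simp add: mult.assoc)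

lemma vector_6 [simp]:
  "(vector [a,b,c,d,e,f] :: ('a::zero)^6) $ 1 = a"
  "(vector [a,b,c,d,e,f] :: ('a::zero)^6) $ 2 = b"
  "(vector [a,b,c,d,e,f] :: ('a::zero)^6) $ 3 = c"
  "(vector [a,b,c,d,e,f] :: ('a::zero)^6) $ 4 = d"
  "(vector [a,b,c,d,e,f] :: ('a::zero)^6) $ 5 = e"
  "(vector [a,b,c,d,e,f] :: ('a::zero)^6) $ 6 = f"
  unfolding vector_def by simp_all

lemma eq_vector_6_iff:
  "(v :: ('a::zero)^6) = vector [a,b,c,d,e,f] \<longleftrightarrow>
     v $ 1 = a \<and> v $ 2 = b \<and> v $ 3 = c \<and> v $ 4 = d \<and> v $ 5 = e \<and> v $ 6 = f"
  unfolding vec_eq_iff forall_6 by simp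

lemma dmat_eq_diag_mat: "dmat xs = diag_mat (vector xs)"
  by (simp add: dmat_def diag6_def diag_mat_def)

lemma dmat_eq_iff: "dmat [a,b,c,d,e,f] = dmat [a',b',c',d',e',f'] \<longleftrightarrow>
    a = a' \<and> b = b' \<and> c = c' \<and> d = d' \<and> e = e' \<and> f = f'"
  by (simp add: dmat_eq_diag_mat diag_mat_eq_iff eq_vector_6_iff)

lemma dmat_mult:
  "dmat [a,b,c,d,e,f] ** dmat [a',b',c',d',e',f'] = dmat [a*a',b*b',c*c',d*d',e*e',f*f']"
  by (simp add: dmat_eq_diag_mat diag_mat_mult diag_mat_eq_iff eq_vector_6_iff)

lemma dmat_add:
  "dmat [a,b,c,d,e,f] + dmat [a',b',c',d',e',f'] = dmat [a+a',b+b',c+c',d+d',e+e',f+f']"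
  by (simp add: dmat_eq_diag_mat diag_mat_add diag_mat_eq_iff eq_vector_6_iff)

lemma mat_1_eq_dmat: "(mat 1 :: real^6^6) = dmat [1,1,1,1,1,1]"
  by (simp add: mat_1_eq_diag_mat dmat_eq_diag_mat diag_mat_eq_iff eq_vector_6_iff)

lemma trace_dmat: "trace (dmat [a,b,c,d,e,f]) = a + b + c + d + e + f"
  by (simp add: dmat_eq_diag_mat trace_diag_mat sum_UNIV_6)

lemma rotation_matrix_dmat:
  assumes "a \<in> {-1,1}" "b \<in> {-1,1}" "c \<in> {-1,1}" "d \<in> {-1,1}" "e \<in> {-1,1}" "f \<in> {-1,1}"
    and "a * b * c * d * e * f = 1"
  shows "rotation_matrix (dmat [a,b,c,d,e,f])"
proof -
  have "\<forall>i. (vector [a,b,c,d,e,f] :: real^6) $ i \<in> {-1, 1::real}"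
    unfolding forall_6 using assms by simp
  moreover have "(\<Prod>i\<in>UNIV. (vector [a,b,c,d,e,f] :: real^6) $ i) = (1::real)"
    using assms(7) by (simp add: prod_UNIV_6)
  ultimately show ?thesis
    unfolding dmat_eq_diag_mat by (intro rotation_matrix_sign_diag) auto
qed

definition swap_14_25 :: "6 \<Rightarrow> 6" where
  "swap_14_25 = Transposition.transpose 1 4 \<circ> Transposition.transpose 2 5"

definition swap_25_36 :: "6 \<Rightarrow> 6" where
  "swap_25_36 = Transposition.transpose 2 5 \<circ> Transposition.transpose 3 6"

lemma swap_14_25_values [simp]:
  "swap_14_25 1 = 4" "swap_14_25 2 = 5" "swap_14_25 3 = 3"
  "swap_14_25 4 = 1" "swap_14_25 5 = 2" "swap_14_25 6 = 6"
  by (simp_all add: swap_14_25_def Transposition.transpose_def)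

lemma swap_25_36_values [simp]:
  "swap_25_36 1 = 1" "swap_25_36 2 = 5" "swap_25_36 3 = 6"
  "swap_25_36 4 = 4" "swap_25_36 5 = 2" "swap_25_36 6 = 3"
  by (simp_all add: swap_25_36_def Transposition.transpose_def)

lemma even_perm_mat_in_SO6:
  assumes "p permutes UNIV" "sign p = 1"
  shows "perm_mat p \<in> carrier SO6"
  using assms by (simp add: rotation_matrix_def orthogonal_perm_mat det_perm_mat)

lemma swap_14_25_in_SO6: "perm_mat swap_14_25 \<in> carrier SO6"
  unfolding swap_14_25_def
  by (intro even_perm_mat_in_SO6 permutes_compose permutes_swap_id)
    (simp_all add: sign_compose permutation_swap_id sign_swap_id)

lemma swap_25_36_in_SO6: "perm_mat swap_25_36 \<in> carrier SO6"
  unfolding swap_25_36_def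
  by (intro even_perm_mat_in_SO6 permutes_compose permutes_swap_id)
    (simp_all add: sign_compose permutation_swap_id sign_swap_id)

lemma conj_swap_14_25:
  "perm_mat swap_14_25 ** dmat [a,b,c,d,e,f] ** transpose (perm_mat swap_14_25) = dmat [d,e,c,a,b,f]"
proof -
  have "swap_14_25 permutes UNIV"
    unfolding swap_14_25_def by (intro permutes_compose permutes_swap_id) auto
  then show ?thesis
    unfolding dmat_eq_diag_mat perm_mat_conj_diag[OF \<open>_ permutes _\<close>] diag_mat_eq_iff eq_vector_6_iff
    by simp
qed

lemma conj_swap_25_36:
  "perm_mat swap_25_36 ** dmat [a,b,c,d,e,f] ** transpose (perm_mat swap_25_36) = dmat [a,e,f,d,b,c]"
proof -
  have "swap_25_36 permutes UNIV"
    unfolding swap_25_36_def by (intro permutes_compose permutes_swap_id) auto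
  then show ?thesis
    unfolding dmat_eq_diag_mat perm_mat_conj_diag[OF \<open>_ permutes _\<close>] diag_mat_eq_iff eq_vector_6_iff
    by simp
qed

text \<open>Enumerations of the two subgroups, arranged so that the i-th elements are conjugate.\<close>
definition Gamma1_diagonals :: "real list list" where
  "Gamma1_diagonals = [[1,1,1,1,1,1], [-1,-1,-1,-1,-1,-1], [-1,-1,1,1,1,1], [-1,1,-1,1,1,1],
     [1,-1,-1,1,1,1], [-1,1,1,-1,-1,-1], [1,-1,1,-1,-1,-1], [1,1,-1,-1,-1,-1]]"

definition Gamma2_diagonals :: "real list list" where
  "Gamma2_diagonals = [[1,1,1,1,1,1], [-1,-1,-1,-1,-1,-1], [-1,-1,1,1,1,1], [1,1,-1,-1,1,1],
     [1,1,1,1,-1,-1], [-1,-1,-1,-1,1,1], [-1,-1,1,1,-1,-1], [1,1,-1,-1,-1,-1]]"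

definition gamma1 :: "nat \<Rightarrow> real^6^6" where "gamma1 i = dmat (Gamma1_diagonals ! i)"
definition gamma2 :: "nat \<Rightarrow> real^6^6" where "gamma2 i = dmat (Gamma2_diagonals ! i)"

lemma lessThan_8: "{..<8::nat} = {0,1,2,3,4,5,6,7}"
  by auto

lemma Gamma1_enum: "Gamma1 = gamma1 ` {..<8}" and inj_gamma1: "inj_on gamma1 {..<8}"
  unfolding lessThan_8 by (simp_all add: gamma1_def Gamma1_diagonals_def Gamma1_def dmat_eq_iff)

lemma Gamma2_enum: "Gamma2 = gamma2 ` {..<8}" and inj_gamma2: "inj_on gamma2 {..<8}"
  unfolding lessThan_8 by (simp_all add: gamma2_def Gamma2_diagonals_def Gamma2_def dmat_eq_iff)

lemma Gamma1_in_SO6: "Gamma1 \<subseteq> carrier SO6"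
  unfolding Gamma1_def by (auto intro!: rotation_matrix_dmat)

lemma Gamma2_in_SO6: "Gamma2 \<subseteq> carrier SO6"
  unfolding Gamma2_def by (auto intro!: rotation_matrix_dmat)

lemma Gamma1_subgroup: "subgroup Gamma1 SO6"
  by (rule group.subgroup_of_involutions[OF SO6_group Gamma1_in_SO6])
    (auto simp: Gamma1_def dmat_mult mat_1_eq_dmat)

lemma Gamma2_subgroup: "subgroup Gamma2 SO6"
  by (rule group.subgroup_of_involutions[OF SO6_group Gamma2_in_SO6])
    (auto simp: Gamma2_def dmat_mult mat_1_eq_dmat)

definition conjugator :: "nat \<Rightarrow> real^6^6" where
  "conjugator i =
     (if i \<in> {3,6} then perm_mat swap_14_25 else if i \<in> {4,5} then perm_mat swap_25_36 else mat 1)"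

lemma conjugator_in_SO6: "conjugator i \<in> carrier SO6"
  using swap_14_25_in_SO6 swap_25_36_in_SO6
  by (simp add: conjugator_def rotation_matrix_def orthogonal_matrix_id)

lemma gamma2_conjugate_gamma1:
  assumes "i < 8"
  shows "gamma2 i = conjugator i ** gamma1 i ** transpose (conjugator i)"
proof -
  have "i \<in> {0,1,2,3,4,5,6,7}"
    using assms lessThan_8 by blast
  then show ?thesis
    by (elim insertE emptyE)
      (simp_all add: conjugator_def gamma1_def gamma2_def Gamma1_diagonals_def
        Gamma2_diagonals_def conj_swap_14_25 conj_swap_25_36)
qed

lemma Gamma_almost_conjugate: "almost_conjugate SO6 Gamma1 Gamma2"
  unfolding Gamma1_enum Gamma2_enum
proof (rule group.almost_conjugate_reindex[OF SO6_group inj_gamma1 inj_gamma2])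
  show "gamma1 ` {..<8} \<subseteq> carrier SO6"
    using Gamma1_in_SO6 by (simp add: Gamma1_enum)
  fix i :: nat assume "i \<in> {..<8}"
  then have "gamma2 i = conjugator i \<otimes>\<^bsub>SO6\<^esub> gamma1 i \<otimes>\<^bsub>SO6\<^esub> inv\<^bsub>SO6\<^esub> conjugator i"
    using gamma2_conjugate_gamma1 SO6_inv[OF conjugator_in_SO6] by simp
  then show "\<exists>g\<in>carrier SO6. gamma2 i = g \<otimes>\<^bsub>SO6\<^esub> gamma1 i \<otimes>\<^bsub>SO6\<^esub> inv\<^bsub>SO6\<^esub> g"
    using conjugator_in_SO6 by blast
qed

lemma Gamma1_trace_2_sum: "\<Sum>{A\<in>Gamma1. trace A = 2} = dmat [-1,-1,-1,3,3,3]"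
proof -
  have "{A\<in>Gamma1. trace A = 2} = {dmat [-1,-1,1,1,1,1], dmat [-1,1,-1,1,1,1], dmat [1,-1,-1,1,1,1]}"
    unfolding Gamma1_def by (auto simp: trace_dmat)
  then show ?thesis
    by (simp add: dmat_eq_iff dmat_add)
qed

lemma Gamma2_trace_2_sum: "\<Sum>{A\<in>Gamma2. trace A = 2} = mat 1"
proof -
  have "{A\<in>Gamma2. trace A = 2} = {dmat [-1,-1,1,1,1,1], dmat [1,1,-1,-1,1,1], dmat [1,1,1,1,-1,-1]}"
    unfolding Gamma2_def by (auto simp: trace_dmat)
  then show ?thesis
    by (simp add: dmat_eq_iff dmat_add mat_1_eq_dmat)
qed

lemma Gamma_not_conjugate: "\<not> conjugate_subgroups SO6 Gamma1 Gamma2"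
proof
  assume "conjugate_subgroups SO6 Gamma1 Gamma2"
  then obtain g where g: "g \<in> carrier SO6"
    and onto: "(\<lambda>h. g \<otimes>\<^bsub>SO6\<^esub> h \<otimes>\<^bsub>SO6\<^esub> inv\<^bsub>SO6\<^esub> g) ` Gamma1 = Gamma2"
    unfolding conjugate_subgroups_def by blast
  have orth: "orthogonal_matrix g"
    using g by (simp add: rotation_matrix_def)
  have "g ** dmat [-1,-1,-1,3,3,3] ** transpose g = mat 1"
    using orthogonal_conj_trace_sum[OF orth, of Gamma1 Gamma2 2] onto
    by (simp add: SO6_inv[OF g] Gamma1_trace_2_sum Gamma2_trace_2_sum)
  then have "dmat [-1,-1,-1,3,3,3] = mat 1"
    by (rule orthogonal_conj_eq_id[OF orth])
  then show False
    by (simp add: mat_1_eq_dmat dmat_eq_iff)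
qed

theorem mainTheorem3:
  shows "subgroup Gamma1 SO6 \<and> subgroup Gamma2 SO6 \<and>
         finite Gamma1 \<and> finite Gamma2 \<and>
         almost_conjugate SO6 Gamma1 Gamma2 \<and> \<not> conjugate_subgroups SO6 Gamma1 Gamma2"
  using Gamma1_subgroup Gamma2_subgroup Gamma_almost_conjugate Gamma_not_conjugate
  by (simp add: Gamma1_def Gamma2_def)

end
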